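(* Let $2\le n\le r$ and let $(X_1,\dots,X_n)$ be a $\{0,1\}$-valued $n$-Markov exchangeable sequence with $P(X_1=0)=1$, represented by the point $w=(w_{0,a,b})_{(a,b)\in\mathcal L_n}$. Then $(X_1,\dots,X_n)$ is $r$-extendible if and only if $w\in\operatorname{conv}\{\gamma^{(n)}_R:R\in\Phi(0,r)\}$. In particular $\operatorname{conv}\{\gamma^{(n)}_R:R\in\Phi(0,r+1)\}\subseteq\operatorname{conv}\{\gamma^{(n)}_R:R\in\Phi(0,r)\}$.
   Context: For a binary sequence its transition count matrix is $N=(n_{i,j})_{i,j\in\{0,1\}}$ with $n_{i,j}$ the number of indices $t$ with $(x_t,x_{t+1})=(i,j)$. $\Phi(0,m)$ is the set of transition count matrices of sequences in $\{0,1\}^m$ starting with $0$. A sequence $(X_1,\dots,X_m)$ is $m$-Markov exchangeable if any two sequences in $\{0,1\}^m$ with the same first value and the same transition count matrix have the same probability. An $n$-Markov exchangeable sequence is $r$-extendible ($r\ge n$) if there is an $r$-Markov exchangeable sequence $(Y_1,\dots,Y_r)$ with $(Y_1,\dots,Y_n)$ equal in law to $(X_1,\dots,X_n)$. Let $\mathcal L_n=\{(a,b)\in\mathbb Z_{\ge0}^2:a+b\le n-2\}\cup\{(n-1,0)\}$; for a distribution of $(X_1,\dots,X_m)$, $m\ge n$, $w_{0,a,b}=P\big((X_1,\dots,X_{a+b+2})=(0^{a+1},1^{b+1})\big)$ for $a+b\le n-2$ and $w_{0,n-1,0}=P(X_1=\dots=X_n=0)$. For $m\ge n$ and $R\in\Phi(0,m)$,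 $h_R$ is the uniform distribution on sequences in $\{0,1\}^m$ starting with $0$ with transition count matrix $R$, and $\gamma^{(n)}_R=(w_{0,a,b})_{(a,b)\in\mathcal L_n}$ computed under $h_R$. *)

theory Defs
  imports "HOL-Analysis.Analysis"
begin

definition seqs :: "nat \<Rightarrow> nat list set" where
  "seqs m = {xs. length xs = m \<and> set xs \<subseteq> {0,1}}"

definition tc :: "nat list \<Rightarrow> nat \<Rightarrow> nat \<Rightarrow> nat" where
  "tc xs i j = card {t. Suc t < length xs \<and> xs ! t = i \<and> xs ! Suc t = j}"

definition tcm :: "nat list \<Rightarrow> nat \<times> nat \<times> nat \<times> nat" where
  "tcm xs = (tc xs 0 0, tc xs 0 1, tc xs 1 0, tc xs 1 1)"

definition Phi0 :: "nat \<Rightarrow> (nat \<times> nat \<times> nat \<times> nat) set" where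
  "Phi0 m = tcm ` {xs \<in> seqs m. xs ! 0 = 0}"

definition is_dist :: "nat \<Rightarrow> (nat list \<Rightarrow> real) \<Rightarrow> bool" where
  "is_dist m p \<longleftrightarrow> (\<forall>xs\<in>seqs m. p xs \<ge> 0) \<and> (\<Sum>xs\<in>seqs m. p xs) = 1"

definition markov_exch :: "nat \<Rightarrow> (nat list \<Rightarrow> real) \<Rightarrow> bool" where
  "markov_exch m p \<longleftrightarrow> is_dist m p \<and>
     (\<forall>xs\<in>seqs m. \<forall>ys\<in>seqs m. xs ! 0 = ys ! 0 \<and> tcm xs = tcm ys \<longrightarrow> p xs = p ys)"

definition marg :: "nat \<Rightarrow> (nat list \<Rightarrow> real) \<Rightarrow> nat \<Rightarrow> nat list \<Rightarrow> real" where
  "marg m p n ys = (\<Sum>xs\<in>{xs\<in>seqs m. take n xs = ys}. p xs)"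

definition extendible :: "nat \<Rightarrow> nat \<Rightarrow> (nat list \<Rightarrow> real) \<Rightarrow> bool" where
  "extendible n r p \<longleftrightarrow>
     (\<exists>q. markov_exch r q \<and> (\<forall>ys\<in>seqs n. marg r q n ys = p ys))"

definition Ln :: "nat \<Rightarrow> (nat \<times> nat) set" where
  "Ln n = {(a,b). a + b + 2 \<le> n} \<union> {(n - 1, 0)}"

definition prefix_prob :: "nat \<Rightarrow> (nat list \<Rightarrow> real) \<Rightarrow> nat list \<Rightarrow> real" where
  "prefix_prob m p zs = (\<Sum>xs\<in>{xs\<in>seqs m. take (length zs) xs = zs}. p xs)"

text \<open>The point (w_{0,a,b})_{(a,b) in L_n} for a distribution p on {0,1}^m, m >= n;
  coordinates outside L_n are set to 0.\<close>
definition wvec :: "nat \<Rightarrow> nat \<Rightarrow> (nat list \<Rightarrow> real) \<Rightarrow> (nat \<times> nat \<Rightarrow> real)" where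
  "wvec n m p = (\<lambda>(a,b).
     if a + b + 2 \<le> n then prefix_prob m p (replicate (a+1) 0 @ replicate (b+1) 1)
     else if (a,b) = (n - 1, 0) then prefix_prob m p (replicate n 0)
     else 0)"

definition hR :: "nat \<Rightarrow> nat \<times> nat \<times> nat \<times> nat \<Rightarrow> nat list \<Rightarrow> real" where
  "hR m R xs = (if xs \<in> {ys\<in>seqs m. ys ! 0 = 0 \<and> tcm ys = R}
                then 1 / real (card {ys\<in>seqs m. ys ! 0 = 0 \<and> tcm ys = R}) else 0)"

definition gamma :: "nat \<Rightarrow> nat \<Rightarrow> nat \<times> nat \<times> nat \<times> nat \<Rightarrow> (nat \<times> nat \<Rightarrow> real)" where
  "gamma n m R = wvec n m (hR m R)"

definition conv_fin :: "(nat \<times> nat \<Rightarrow> real) set \<Rightarrow> (nat \<times> nat \<Rightarrow> real) set" where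
  "conv_fin S = {x. \<exists>c. (\<forall>s\<in>S. c s \<ge> 0) \<and> (\<Sum>s\<in>S. c s) = 1 \<and>
                         (\<forall>k. x k = (\<Sum>s\<in>S. c s * s k))}"

end

theory Submission
  imports Defs
begin

text \<open>
  A Markov exchangeable law \<open>q\<close> on \<open>{0,1}\<^sup>m\<close> that starts with 0 is constant on the classes
  "first letter 0, transition count matrix \<open>R\<close>", hence it is the mixture of the uniform laws
  \<open>h_R\<close>, \<open>R \<in> \<Phi>(0,m)\<close>; since \<open>w\<close> is linear in the law, \<open>w(q)\<close> lies in the convex hull of the
  \<open>\<gamma>\<^sub>R = w(h_R)\<close>.  Marginals of Markov exchangeable laws are again Markov exchangeable (the
  transition counts of \<open>z @ y\<close> depend on \<open>z\<close> only through its first letter and its counts) and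
  have the same \<open>w\<close>.  Conversely, \<open>w\<close> determines an \<open>n\<close>-Markov exchangeable law starting
  with 0: if all coordinates of \<open>w\<close> of a signed Markov exchangeable weight vanish, then so
  does the weight of every prefix, by induction on the number of descents \<open>1 0\<close>, using that
  a prefix can be rearranged (keeping its transition counts) so that its last letter can be
  split off.  The theorem follows: an extension gives \<open>w \<in> conv{\<gamma>\<^sub>R}\<close>; a convex combination
  of the \<open>h_R\<close> realising \<open>w\<close> is an extension by identifiability; and \<open>\<gamma>\<^sub>R\<close> for length
  \<open>r+1\<close> is the \<open>w\<close> of the Markov exchangeable \<open>r\<close>-marginal of \<open>h_R\<close>.
\<close>

section \<open>Transition counts\<close>

fun tcount :: "nat list \<Rightarrow> nat \<Rightarrow> nat \<Rightarrow> nat" where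
  "tcount (a # b # xs) i j = (if a = i \<and> b = j then 1 else 0) + tcount (b # xs) i j"
| "tcount _ i j = 0"

lemma tc_eq_tcount: "tc xs i j = tcount xs i j"
proof (induction xs i j rule: tcount.induct)
  case (1 a b xs i j)
  let ?B = "{t. Suc t < length (b#xs) \<and> (b#xs)!t = i \<and> (b#xs)!Suc t = j}"
  have split: "{t. Suc t < length (a#b#xs) \<and> (a#b#xs)!t = i \<and> (a#b#xs)!Suc t = j}
     = (if a = i \<and> b = j then {0} else {}) \<union> Suc ` ?B"
    (is "?L = ?R")
  proof (intro set_eqI iffI)
    fix t assume "t \<in> ?L" then show "t \<in> ?R" by (cases t) auto
  next
    fix t assume "t \<in> ?R" then show "t \<in> ?L" by (auto split: if_splits)
  qed
  have "finite ?B" by (rule finite_subset[of _ "{..<length (b#xs)}"]) auto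
  then have "tc (a#b#xs) i j = (if a = i \<and> b = j then 1 else 0) + card ?B"
    unfolding tc_def split by (subst card_Un_disjoint) (auto simp: card_image)
  then show ?case using 1 by (simp add: tc_def)
qed (simp_all add: tc_def)

lemma tcount_Cons:
  "tcount (x # ys) i j = (if ys \<noteq> [] \<and> x = i \<and> hd ys = j then 1 else 0) + tcount ys i j"
  by (cases ys) auto

lemma tcount_append: "tcount (xs @ ys) i j = tcount xs i j + tcount ys i j
   + (if xs \<noteq> [] \<and> ys \<noteq> [] \<and> last xs = i \<and> hd ys = j then 1 else 0)"
proof (induction xs)
  case (Cons x xs)
  then show ?case by (cases xs) (auto simp: tcount_Cons)
qed simp

lemma tcount_snoc:
  "tcount (xs @ [c]) i j = tcount xs i j + (if xs \<noteq> [] \<and> last xs = i \<and> c = j then 1 else 0)"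
  by (simp add: tcount_append)

lemma tcount_non_binary:
  "set zs \<subseteq> {0,1} \<Longrightarrow> i \<notin> {0,1} \<or> j \<notin> {0,1} \<Longrightarrow> tcount zs i j = 0"
  by (induction zs i j rule: tcount.induct) auto

lemma tcm_eq_iff_tcount:
  assumes "set xs \<subseteq> {0,1}" "set ys \<subseteq> {0,1}"
  shows "tcm xs = tcm ys \<longleftrightarrow> tcount xs = tcount ys"
proof
  assume "tcm xs = tcm ys"
  then have "tcount xs i j = tcount ys i j" if "i \<in> {0,1}" "j \<in> {0,1}" for i j
    using that by (auto simp: tcm_def tc_eq_tcount)
  then show "tcount xs = tcount ys"
    using tcount_non_binary[OF assms(1)] tcount_non_binary[OF assms(2)] by (intro ext) metis
qed (simp add: tcm_def tc_eq_tcount)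

lemma tcount_balance:
  "set xs \<subseteq> {0,1} \<Longrightarrow> xs \<noteq> [] \<Longrightarrow>
   tcount xs 0 1 + (if hd xs = 1 then 1 else 0) = tcount xs 1 0 + (if last xs = 1 then 1 else 0)"
proof (induction xs)
  case (Cons x xs)
  show ?case
  proof (cases "xs = []")
    case False
    have "hd xs \<in> {0,1}" "x \<in> {0,1}" using Cons.prems False hd_in_set by auto
    then show ?thesis using Cons False by (auto simp: tcount_Cons)
  qed simp
qed simp

lemma last_determined:
  assumes "set xs \<subseteq> {0,1}" "set ys \<subseteq> {0,1}" "xs \<noteq> []" "ys \<noteq> []" "hd xs = hd ys"
    and "tcount xs = tcount ys"
  shows "last xs = last ys"
proof -
  have balance_ys: "tcount xs 0 1 + (if hd xs = 1 then 1 else 0) = tcount xs 1 0 + (if last ys = 1 then 1 else 0)"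
    using tcount_balance[OF assms(2,4)] by (simp only: assms(5,6)[symmetric])
  have "last xs = 1 \<longleftrightarrow> last ys = 1"
    using tcount_balance[OF assms(1,3)] balance_ys by (cases "last xs = 1"; cases "last ys = 1") simp_all
  moreover have "last xs \<in> {0,1}" "last ys \<in> {0,1}"
    using assms(1-4) last_in_set by blast+
  ultimately show ?thesis by fastforce
qed

text \<open>This is what makes Markov exchangeability
  compatible with conditioning on prefixes.\<close>
lemma tcount_append_cong:
  assumes "set z \<subseteq> {0,1}" "set z' \<subseteq> {0,1}" "z \<noteq> []" "z' \<noteq> []" "hd z = hd z'"
    and "tcount z = tcount z'"
  shows "tcount (z @ y) = tcount (z' @ y)"
  using last_determined[OF assms] assms(3,4,6) by (simp add: fun_eq_iff tcount_append)

lemma seqs_binary: "x \<in> seqs m \<Longrightarrow> set x \<subseteq> {0,1}"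
  by (simp add: seqs_def)

lemma finite_seqs: "finite (seqs m)"
proof -
  have "seqs m = {xs. set xs \<subseteq> {0,1} \<and> length xs = m}" by (auto simp: seqs_def)
  then show ?thesis using finite_lists_length_eq[of "{0::nat,1}" m] by simp
qed

lemma finite_Phi0: "finite (Phi0 m)"
  unfolding Phi0_def using finite_seqs by simp

lemma seqs_with_prefix:
  assumes "z \<in> seqs k" "k \<le> m"
  shows "{x\<in>seqs m. take k x = z} = (\<lambda>y. z @ y) ` seqs (m - k)"
proof (intro set_eqI iffI)
  fix x assume x: "x \<in> {x\<in>seqs m. take k x = z}"
  then have "x = z @ drop k x" by (metis (mono_tags, lifting) append_take_drop_id mem_Collect_eq)
  moreover have "drop k x \<in> seqs (m - k)" using x by (auto simp: seqs_def dest: in_set_dropD)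
  ultimately show "x \<in> (\<lambda>y. z @ y) ` seqs (m - k)" by blast
qed (use assms in \<open>auto simp: seqs_def\<close>)

lemma sum_over_prefix:
  assumes "z \<in> seqs k" "k \<le> m"
  shows "(\<Sum>x\<in>{x\<in>seqs m. take k x = z}. f x) = (\<Sum>y\<in>seqs (m - k). f (z @ y))"
  unfolding seqs_with_prefix[OF assms] by (subst sum.reindex) (auto simp: inj_on_def)

lemma prefix_prob_cong:
  "(\<And>x. x \<in> seqs m \<Longrightarrow> q x = q' x) \<Longrightarrow> prefix_prob m q zs = prefix_prob m q' zs"
  unfolding prefix_prob_def by (rule sum.cong) auto

lemma wvec_cong: "(\<And>x. x \<in> seqs m \<Longrightarrow> q x = q' x) \<Longrightarrow> wvec n m q = wvec n m q'"
  unfolding wvec_def using prefix_prob_cong[of m q q'] by (auto simp: fun_eq_iff)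

lemma prefix_prob_zero:
  assumes "1 \<le> m"
  shows "prefix_prob m q [0] = (\<Sum>x\<in>{x\<in>seqs m. x!0 = 0}. q x)"
  unfolding prefix_prob_def
proof (rule sum.cong)
  show "{xs \<in> seqs m. take (length [0]) xs = [0]} = {x \<in> seqs m. x ! 0 = 0}"
    using assms by (auto simp: seqs_def) (case_tac x; simp)+
qed simp

definition zero_start :: "nat \<Rightarrow> (nat list \<Rightarrow> real) \<Rightarrow> bool" where
  "zero_start m q \<longleftrightarrow> (\<forall>x\<in>seqs m. x!0 \<noteq> 0 \<longrightarrow> q x = 0)"

lemma zero_start_iff:
  assumes "is_dist m q"
  shows "(\<Sum>x\<in>{x\<in>seqs m. x!0 = 0}. q x) = 1 \<longleftrightarrow> zero_start m q"
proof -
  let ?A = "{x\<in>seqs m. x!0 = 0}" and ?B = "{x\<in>seqs m. x!0 \<noteq> 0}"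
  have "seqs m = ?A \<union> ?B" by auto
  then have "1 = (\<Sum>x\<in>?A. q x) + (\<Sum>x\<in>?B. q x)"
    using assms finite_seqs[of m] unfolding is_dist_def
    by (metis (no_types, lifting) sum.union_disjoint disjoint_iff finite_Un mem_Collect_eq)
  moreover have "(\<Sum>x\<in>?B. q x) = 0 \<longleftrightarrow> (\<forall>x\<in>?B. q x = 0)"
    using assms finite_seqs[of m] unfolding is_dist_def by (intro sum_nonneg_eq_0_iff) auto
  ultimately show ?thesis unfolding zero_start_def by auto
qed

lemma prefix_prob_marg:
  assumes "n \<le> m" "length zs \<le> n"
  shows "prefix_prob n (marg m q n) zs = prefix_prob m q zs"
proof -
  let ?l = "length zs"
  let ?S = "{x\<in>seqs m. take ?l x = zs}"
  let ?T = "{ys\<in>seqs n. take ?l ys = zs}"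
  have img: "take n ` ?S \<subseteq> ?T"
    using assms by (auto simp: seqs_def min_def dest: in_set_takeD)
  have "prefix_prob n (marg m q n) zs = (\<Sum>ys\<in>?T. \<Sum>x\<in>{x\<in>?S. take n x = ys}. q x)"
    unfolding prefix_prob_def marg_def
    by (intro sum.cong refl arg_cong[where f = "\<lambda>A. sum q A"]) (use assms in \<open>auto simp: min_def\<close>)
  also have "\<dots> = (\<Sum>x\<in>?S. q x)" by (rule sum.group) (use img finite_seqs in auto)
  finally show ?thesis by (simp add: prefix_prob_def)
qed

lemma wvec_marg: "n \<le> l \<Longrightarrow> l \<le> m \<Longrightarrow> wvec n l (marg m q l) = wvec n m q"
  unfolding wvec_def by (auto simp: fun_eq_iff prefix_prob_marg)

lemma marg_zero_start:
  assumes "zero_start m q" "1 \<le> l"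
  shows "zero_start l (marg m q l)"
  unfolding zero_start_def marg_def
proof (intro ballI impI sum.neutral)
  fix z x assume z: "z \<in> seqs l" "z!0 \<noteq> 0" and x: "x \<in> {xs \<in> seqs m. take l xs = z}"
  then have "x!0 = z!0" using assms(2) by auto
  then show "q x = 0" using assms(1) x z(2) by (simp add: zero_start_def)
qed

text \<open>Marginals of Markov exchangeable laws are Markov exchangeable: two prefixes with the same
  first letter and transition counts have extensions with equal transition counts.\<close>
lemma marg_markov_exch:
  assumes me: "markov_exch m q" and k: "1 \<le> k" "k \<le> m"
  shows "markov_exch k (marg m q k)"
proof -
  have qn: "\<forall>x\<in>seqs m. q x \<ge> 0" and q1: "(\<Sum>x\<in>seqs m. q x) = 1"
    using me unfolding markov_exch_def is_dist_def by blast+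
  have nonneg: "\<forall>z\<in>seqs k. marg m q k z \<ge> 0"
    unfolding marg_def using qn by (auto intro: sum_nonneg)
  have img: "take k ` seqs m \<subseteq> seqs k"
    using k by (auto simp: seqs_def min_def dest: in_set_takeD)
  have total: "(\<Sum>z\<in>seqs k. marg m q k z) = 1"
    unfolding marg_def using sum.group[OF finite_seqs finite_seqs img, of q] q1 by simp
  have exch: "marg m q k z = marg m q k z'"
    if z: "z \<in> seqs k" "z' \<in> seqs k" "z!0 = z'!0" "tcm z = tcm z'" for z z'
  proof -
    have ne: "z \<noteq> []" "z' \<noteq> []" using z k by (auto simp: seqs_def)
    have tz: "tcount z = tcount z'" using z tcm_eq_iff_tcount seqs_binary by blast
    have "q (z @ y) = q (z' @ y)" if y: "y \<in> seqs (m - k)" for y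
    proof -
      have in_m: "z @ y \<in> seqs m" "z' @ y \<in> seqs m" using z y k by (auto simp: seqs_def)
      have "tcount (z @ y) = tcount (z' @ y)"
        by (rule tcount_append_cong) (use z ne tz seqs_binary in \<open>auto simp: hd_conv_nth\<close>)
      then have "tcm (z @ y) = tcm (z' @ y)" using tcm_eq_iff_tcount seqs_binary in_m by blast
      moreover have "(z @ y)!0 = (z' @ y)!0" using ne z by (simp add: nth_append)
      ultimately show ?thesis using me in_m unfolding markov_exch_def by blast
    qed
    then show ?thesis
      unfolding marg_def sum_over_prefix[OF z(1) k(2)] sum_over_prefix[OF z(2) k(2)] by simp
  qed
  show ?thesis unfolding markov_exch_def is_dist_def using nonneg total exch by blast
qed

lemma markov_exch_mixture:
  assumes "\<And>i. i \<in> A \<Longrightarrow> c i \<ge> 0" "(\<Sum>i\<in>A. c i) = 1"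
    and "\<And>i. i \<in> A \<Longrightarrow> markov_exch m (q i)"
  shows "markov_exch m (\<lambda>x. \<Sum>i\<in>A. c i * q i x)"
proof -
  have q: "\<forall>x\<in>seqs m. q i x \<ge> 0" "(\<Sum>x\<in>seqs m. q i x) = 1"
    "\<forall>xs\<in>seqs m. \<forall>ys\<in>seqs m. xs ! 0 = ys ! 0 \<and> tcm xs = tcm ys \<longrightarrow> q i xs = q i ys"
    if "i \<in> A" for i
    using assms(3)[OF that] unfolding markov_exch_def is_dist_def by blast+
  have swap: "(\<Sum>x\<in>seqs m. \<Sum>i\<in>A. c i * q i x) = (\<Sum>i\<in>A. c i * (\<Sum>x\<in>seqs m. q i x))"
    by (subst sum.swap) (simp add: sum_distrib_left)
  have "(\<Sum>i\<in>A. c i * q i x) \<ge> 0" if "x \<in> seqs m" for x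
    using assms(1) q(1) that by (intro sum_nonneg mult_nonneg_nonneg) blast+
  moreover have "(\<Sum>x\<in>seqs m. \<Sum>i\<in>A. c i * q i x) = 1"
    using swap assms(2) q(2) by simp
  moreover have "(\<Sum>i\<in>A. c i * q i xs) = (\<Sum>i\<in>A. c i * q i ys)"
    if "xs \<in> seqs m" "ys \<in> seqs m" "xs ! 0 = ys ! 0 \<and> tcm xs = tcm ys" for xs ys
    using q(3) that by (intro sum.cong refl) metis
  ultimately show ?thesis unfolding markov_exch_def is_dist_def by blast
qed

lemma prefix_prob_mixture:
  "prefix_prob m (\<lambda>x. \<Sum>i\<in>A. c i * q i x) zs = (\<Sum>i\<in>A. c i * prefix_prob m (q i) zs)"
  unfolding prefix_prob_def by (subst sum.swap) (simp add: sum_distrib_left)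

lemma wvec_mixture:
  "wvec n m (\<lambda>x. \<Sum>i\<in>A. c i * q i x) k = (\<Sum>i\<in>A. c i * wvec n m (q i) k)"
  by (cases k) (auto simp: wvec_def prefix_prob_mixture)

section \<open>The extreme points \<open>h_R\<close>\<close>

definition tcm_class :: "nat \<Rightarrow> nat \<times> nat \<times> nat \<times> nat \<Rightarrow> nat list set" where
  "tcm_class m R = {ys\<in>seqs m. ys ! 0 = 0 \<and> tcm ys = R}"

lemma hR_eq: "hR m R x = (if x \<in> tcm_class m R then 1 / real (card (tcm_class m R)) else 0)"
  by (simp add: hR_def tcm_class_def)

lemma finite_tcm_class: "finite (tcm_class m R)"
  using finite_seqs unfolding tcm_class_def by simp

lemma hR_markov_exch:
  assumes "R \<in> Phi0 m"
  shows "markov_exch m (hR m R)"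
proof -
  have sub: "tcm_class m R \<subseteq> seqs m" and ne: "tcm_class m R \<noteq> {}"
    using assms by (auto simp: tcm_class_def Phi0_def)
  have "(\<Sum>x\<in>seqs m. hR m R x) = (\<Sum>x\<in>tcm_class m R. 1 / real (card (tcm_class m R)))"
    unfolding hR_eq using sub finite_seqs[of m] by (simp add: sum.If_cases Int_absorb1)
  also have "\<dots> = 1" using finite_tcm_class[of m R] ne by simp
  finally show ?thesis unfolding markov_exch_def is_dist_def hR_def by auto
qed

lemma hR_zero_start: "zero_start m (hR m R)"
  unfolding zero_start_def hR_def by auto

text \<open>A Markov exchangeable law is constant on each class, so it is the mixture of the
  uniform laws on the classes, weighted by the class masses.\<close>
lemma class_mass:
  assumes "markov_exch m q" "x \<in> tcm_class m R"
  shows "(\<Sum>y\<in>tcm_class m R. q y) = real (card (tcm_class m R)) * q x"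
proof -
  have "q y = q x" if "y \<in> tcm_class m R" for y
    using assms that unfolding markov_exch_def tcm_class_def by auto
  then show ?thesis by simp
qed

lemma markov_exch_decomposition:
  assumes me: "markov_exch m q" and zs: "zero_start m q"
  shows "\<exists>c. (\<forall>R\<in>Phi0 m. c R \<ge> 0) \<and> (\<Sum>R\<in>Phi0 m. c R) = 1 \<and>
             (\<forall>x\<in>seqs m. q x = (\<Sum>R\<in>Phi0 m. c R * hR m R x))"
proof (intro exI conjI ballI)
  define c where "c R = (\<Sum>y\<in>tcm_class m R. q y)" for R
  let ?S = "{x\<in>seqs m. x!0 = 0}"
  have qn: "\<forall>x\<in>seqs m. q x \<ge> 0" using me unfolding markov_exch_def is_dist_def by blast
  show "c R \<ge> 0" for R unfolding c_def using qn by (auto intro: sum_nonneg simp: tcm_class_def)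
  have "(\<Sum>R\<in>Phi0 m. c R) = (\<Sum>R\<in>Phi0 m. \<Sum>x\<in>{x\<in>?S. tcm x = R}. q x)"
    unfolding c_def tcm_class_def by (rule sum.cong) auto
  also have "\<dots> = (\<Sum>x\<in>?S. q x)"
    by (rule sum.group) (use finite_seqs finite_Phi0 in \<open>auto simp: Phi0_def\<close>)
  also have "\<dots> = 1" using zero_start_iff me zs by (simp add: markov_exch_def)
  finally show "(\<Sum>R\<in>Phi0 m. c R) = 1" .
  fix x assume x: "x \<in> seqs m"
  show "q x = (\<Sum>R\<in>Phi0 m. c R * hR m R x)"
  proof (cases "x!0 = 0")
    case False
    then show ?thesis using zs x by (simp add: zero_start_def hR_def)
  next
    case True
    let ?R = "tcm x"
    have xC: "x \<in> tcm_class m ?R" and R: "?R \<in> Phi0 m"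
      using x True by (simp_all add: tcm_class_def Phi0_def)
    have "card (tcm_class m ?R) > 0" using xC finite_tcm_class card_gt_0_iff by blast
    then have "q x = c ?R / real (card (tcm_class m ?R))"
      using class_mass[OF me xC] by (simp add: c_def)
    also have "\<dots> = (\<Sum>R\<in>Phi0 m. if R = ?R then c ?R / real (card (tcm_class m ?R)) else 0)"
      using R finite_Phi0 by simp
    also have "\<dots> = (\<Sum>R\<in>Phi0 m. c R * hR m R x)"
      using xC by (intro sum.cong) (auto simp: hR_eq tcm_class_def)
    finally show ?thesis .
  qed
qed

lemma conv_fin_mem:
  assumes "finite S" "s \<in> S"
  shows "s \<in> conv_fin S"
  unfolding conv_fin_def
proof (intro CollectI exI[of _ "\<lambda>t. if t = s then 1 else 0"] conjI allI ballI)
  fix k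
  have "(\<Sum>t\<in>S. (if t = s then 1 else 0) * t k) = (\<Sum>t\<in>S. if t = s then s k else 0)"
    by (rule sum.cong) auto
  then show "s k = (\<Sum>t\<in>S. (if t = s then 1 else 0) * t k)"
    using assms by simp
qed (use assms in auto)

lemma conv_fin_combination:
  assumes "finite A" "\<And>i. i \<in> A \<Longrightarrow> c i \<ge> 0" "(\<Sum>i\<in>A. c i) = 1"
    and "\<And>i. i \<in> A \<Longrightarrow> x i \<in> conv_fin S"
  shows "(\<lambda>k. \<Sum>i\<in>A. c i * x i k) \<in> conv_fin S"
proof -
  have "\<forall>i\<in>A. \<exists>u. (\<forall>s\<in>S. u s \<ge> 0) \<and> (\<Sum>s\<in>S. u s) = 1 \<and>
      (\<forall>k. x i k = (\<Sum>s\<in>S. u s * s k))"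
    using assms(4) unfolding conv_fin_def by blast
  then obtain u where u: "\<forall>i\<in>A. (\<forall>s\<in>S. u i s \<ge> 0) \<and> (\<Sum>s\<in>S. u i s) = 1 \<and>
      (\<forall>k. x i k = (\<Sum>s\<in>S. u i s * s k))"
    by (rule bchoice[elim_format]) blast
  define v where "v s = (\<Sum>i\<in>A. c i * u i s)" for s
  have v_nonneg: "\<forall>s\<in>S. v s \<ge> 0"
    unfolding v_def using assms(2) u by (auto intro!: sum_nonneg mult_nonneg_nonneg)
  have "(\<Sum>s\<in>S. v s) = (\<Sum>i\<in>A. c i * (\<Sum>s\<in>S. u i s))"
    unfolding v_def by (subst sum.swap) (simp add: sum_distrib_left)
  also have "\<dots> = 1"
    using u assms(3) by (metis (no_types, lifting) mult.right_neutral sum.cong)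
  finally have v_sum: "(\<Sum>s\<in>S. v s) = 1" .
  have v_comb: "(\<Sum>i\<in>A. c i * x i k) = (\<Sum>s\<in>S. v s * s k)" for k
  proof -
    have "(\<Sum>i\<in>A. c i * x i k) = (\<Sum>i\<in>A. \<Sum>s\<in>S. c i * u i s * s k)"
    proof (rule sum.cong[OF refl])
      fix i assume "i \<in> A"
      then have "x i k = (\<Sum>s\<in>S. u i s * s k)" using u by blast
      then show "c i * x i k = (\<Sum>s\<in>S. c i * u i s * s k)"
        by (simp add: sum_distrib_left mult.assoc)
    qed
    also have "\<dots> = (\<Sum>s\<in>S. v s * s k)"
      unfolding v_def by (subst sum.swap) (simp add: sum_distrib_right)
    finally show ?thesis .
  qed
  show ?thesis
    unfolding conv_fin_def using v_nonneg v_sum v_comb by blast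
qed

text \<open>A set lying in a convex hull has its own hull inside it (finiteness of \<open>T\<close> is
  automatic, since coefficients summing to 1 force a finite index set).\<close>
lemma conv_fin_subset:
  assumes "T \<subseteq> conv_fin S"
  shows "conv_fin T \<subseteq> conv_fin S"
proof
  fix x assume "x \<in> conv_fin T"
  then obtain c where c: "\<forall>t\<in>T. c t \<ge> 0" "(\<Sum>t\<in>T. c t) = 1" "\<forall>k. x k = (\<Sum>t\<in>T. c t * t k)"
    unfolding conv_fin_def by blast
  have "finite T" using c(2) sum.infinite by fastforce
  then have "(\<lambda>k. \<Sum>t\<in>T. c t * t k) \<in> conv_fin S"
    using c assms by (intro conv_fin_combination) auto
  moreover have "x = (\<lambda>k. \<Sum>t\<in>T. c t * t k)" using c(3) by blast
  ultimately show "x \<in> conv_fin S" by simp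
qed

lemma wvec_in_conv_gamma:
  assumes "markov_exch m q" "zero_start m q"
  shows "wvec n m q \<in> conv_fin (gamma n m ` Phi0 m)"
proof -
  obtain c where c: "\<forall>R\<in>Phi0 m. c R \<ge> 0" "(\<Sum>R\<in>Phi0 m. c R) = 1"
    "\<forall>x\<in>seqs m. q x = (\<Sum>R\<in>Phi0 m. c R * hR m R x)"
    using markov_exch_decomposition[OF assms] by blast
  have "wvec n m q = wvec n m (\<lambda>x. \<Sum>R\<in>Phi0 m. c R * hR m R x)"
    using c(3) by (intro wvec_cong) simp
  also have "\<dots> = (\<lambda>k. \<Sum>R\<in>Phi0 m. c R * gamma n m R k)"
    by (simp add: fun_eq_iff wvec_mixture gamma_def)
  also have "\<dots> \<in> conv_fin (gamma n m ` Phi0 m)"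
    using c finite_Phi0 by (intro conv_fin_combination conv_fin_mem) auto
  finally show ?thesis .
qed

section \<open>Rearranging binary words\<close>

lemma no_descent_block_word:
  "set z \<subseteq> {0,1} \<Longrightarrow> z \<noteq> [] \<Longrightarrow> hd z = 0 \<Longrightarrow> tcount z 1 0 = 0 \<Longrightarrow>
   \<exists>a b. a \<ge> 1 \<and> z = replicate a 0 @ replicate b (1::nat)"
proof (induction z rule: rev_induct)
  case (snoc c u)
  show ?case
  proof (cases "u = []")
    case True
    then show ?thesis using snoc.prems by (intro exI[of _ 1] exI[of _ 0]) simp
  next
    case False
    have "tcount u 1 0 = 0" "hd u = 0" "set u \<subseteq> {0,1}"
      using snoc.prems False by (simp_all add: tcount_snoc)
    then obtain a b where ab: "a \<ge> 1" "u = replicate a 0 @ replicate b (1::nat)"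
      using snoc.IH False by blast
    show ?thesis
    proof (cases "c = 1")
      case True
      then have "u @ [c] = replicate a 0 @ replicate (Suc b) 1"
        using ab by (simp add: replicate_append_same)
      then show ?thesis using ab by blast
    next
      case False
      then have c0: "c = 0" using snoc.prems(1) by auto
      have "last u \<noteq> 1" using snoc.prems(4) c0 \<open>u \<noteq> []\<close> by (simp add: tcount_snoc split: if_splits)
      then have "b = 0" using ab by (cases b) (auto simp: last_replicate split: if_splits)
      then have "u @ [c] = replicate (Suc a) 0 @ replicate 0 1"
        using ab c0 by (simp add: replicate_append_same)
      then show ?thesis by (intro exI[of _ "Suc a"] exI[of _ 0]) simp
    qed
  qed
qed simp

text \<open>A word starting with 0, ending with 0 and containing a descent has the transition counts
  of some \<open>u @ [0]\<close> with \<open>u\<close> ending in 1 (move a leading 0 of the last run to the front).\<close>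
lemma rearrange_end_0:
  "set z \<subseteq> {0,1} \<Longrightarrow> z \<noteq> [] \<Longrightarrow> hd z = 0 \<Longrightarrow> last z = 0 \<Longrightarrow> tcount z 1 0 \<ge> 1 \<Longrightarrow>
   \<exists>u. set u \<subseteq> {0,1} \<and> u \<noteq> [] \<and> hd u = 0 \<and> last u = 1 \<and> length u + 1 = length z
       \<and> tcount (u @ [0]) = tcount z"
proof (induction z rule: rev_induct)
  case (snoc c y)
  have c0: "c = 0" using snoc.prems(4) by simp
  have yne: "y \<noteq> []" using snoc.prems(5) by (cases y) auto
  have hy: "hd y = 0" and bny: "set y \<subseteq> {0,1}" using snoc.prems(1,3) yne by auto
  show ?case
  proof (cases "last y = 1")
    case True
    then show ?thesis using bny yne hy c0 by (intro exI[of _ y]) simp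
  next
    case False
    then have ly0: "last y = 0" using bny last_in_set[OF yne] by blast
    have "tcount y 1 0 \<ge> 1" using snoc.prems(5) ly0 by (simp add: tcount_snoc)
    then obtain u where u: "set u \<subseteq> {0,1}" "u \<noteq> []" "hd u = 0" "last u = 1"
       "length u + 1 = length y" "tcount (u @ [0]) = tcount y"
      using snoc.IH[OF bny yne hy ly0] by blast
    have "tcount ((0 # u) @ [0]) i j = tcount (y @ [c]) i j" for i j
      using u ly0 c0 yne by (simp add: tcount_Cons tcount_snoc fun_eq_iff)
    then show ?thesis using u by (intro exI[of _ "0 # u"]) (simp add: fun_eq_iff)
  qed
qed simp

lemma descent_interior_one:
  assumes "u \<noteq> []" "hd u = 0" "tcount u 1 0 \<ge> 1"
  shows "\<exists>a b. u = a @ 1 # b \<and> a \<noteq> [] \<and> b \<noteq> []"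
proof -
  have "tc u 1 0 \<noteq> 0" using assms(3) by (simp add: tc_eq_tcount)
  then obtain t where t: "Suc t < length u" "u ! t = 1" "u ! Suc t = 0"
    unfolding tc_def by (metis (mono_tags, lifting) card.empty empty_Collect_eq)
  have "t \<noteq> 0" using t(2) assms(1,2) by (metis hd_conv_nth zero_neq_one)
  then have "take t u \<noteq> []" "drop (Suc t) u \<noteq> []" using t(1) assms(1) by simp_all
  moreover have "u = take t u @ 1 # drop (Suc t) u" using t id_take_nth_drop[of t u] by simp
  ultimately show ?thesis by blast
qed

text \<open>Symmetrically, a word starting with 0, ending with 1 and containing a descent has the
  transition counts of some \<open>u @ [1]\<close> with \<open>u\<close> ending in 0 (duplicate a 1 inside a descent).\<close>
lemma rearrange_end_1:
  "set z \<subseteq> {0,1} \<Longrightarrow> z \<noteq> [] \<Longrightarrow> hd z = 0 \<Longrightarrow> last z = 1 \<Longrightarrow> tcount z 1 0 \<ge> 1 \<Longrightarrow>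
   \<exists>u. set u \<subseteq> {0,1} \<and> u \<noteq> [] \<and> hd u = 0 \<and> last u = 0 \<and> length u + 1 = length z
       \<and> tcount (u @ [1]) = tcount z"
proof (induction z rule: rev_induct)
  case (snoc c y)
  have c1: "c = 1" using snoc.prems(4) by simp
  have yne: "y \<noteq> []" using snoc.prems(5) by (cases y) auto
  have hy: "hd y = 0" and bny: "set y \<subseteq> {0,1}" using snoc.prems(1,3) yne by auto
  show ?case
  proof (cases "last y = 0")
    case True
    then show ?thesis using bny yne hy c1 by (intro exI[of _ y]) simp
  next
    case False
    have "last y \<in> {0,1}" using bny last_in_set[OF yne] by blast
    then have ly1: "last y = 1" using False by simp
    have "tcount y 1 0 \<ge> 1" using snoc.prems(5) ly1 c1 by (simp add: tcount_snoc)
    then obtain u' where u': "set u' \<subseteq> {0,1}" "u' \<noteq> []" "hd u' = 0" "last u' = 0"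
       "length u' + 1 = length y" "tcount (u' @ [1]) = tcount y"
      using snoc.IH[OF bny yne hy ly1] by blast
    have "tcount (u' @ [1]) 1 0 = tcount u' 1 0" by (simp add: tcount_snoc)
    then have "tcount u' 1 0 \<ge> 1" using u'(6) \<open>tcount y 1 0 \<ge> 1\<close> by simp
    then obtain a b where u'_eq: "u' = a @ 1 # b" and ane: "a \<noteq> []" and bne: "b \<noteq> []"
      using descent_interior_one u'(2,3) by blast
    define u where "u = a @ 1 # 1 # b"
    have "tcount (u @ [1]) i j = tcount (y @ [c]) i j" for i j
    proof -
      have "tcount (u @ [1]) i j = tcount (u' @ [1]) i j + (if i = 1 \<and> j = 1 then 1 else 0)"
        unfolding u_def u'_eq by (simp add: tcount_append)
      also have "\<dots> = tcount (y @ [c]) i j" using u'(6) ly1 c1 yne by (simp add: tcount_snoc)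
      finally show ?thesis .
    qed
    then have "tcount (u @ [1]) = tcount (y @ [c])" by (simp add: fun_eq_iff)
    moreover have "set u \<subseteq> {0,1}" "u \<noteq> []" "hd u = 0" "last u = 0"
      "length u + 1 = length (y @ [c])"
      unfolding u_def using u' ane bne u'_eq by auto
    ultimately show ?thesis by blast
  qed
qed simp

section \<open>The vector \<open>w\<close> determines the law\<close>

text \<open>Markov exchangeability on the sequences starting with 0, for an arbitrary signed weight
  (needed for differences of two laws).\<close>
definition exch_zero_start :: "nat \<Rightarrow> (nat list \<Rightarrow> real) \<Rightarrow> bool" where
  "exch_zero_start n d \<longleftrightarrow> (\<forall>x\<in>seqs n. \<forall>y\<in>seqs n.
     x!0 = 0 \<longrightarrow> y!0 = 0 \<longrightarrow> tcm x = tcm y \<longrightarrow> d x = d y)"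

lemma prefix_prob_split:
  assumes "length z < n"
  shows "prefix_prob n d z = prefix_prob n d (z @ [0]) + prefix_prob n d (z @ [1])"
proof -
  let ?k = "length z"
  let ?B = "\<lambda>c. {x\<in>seqs n. take (Suc ?k) x = z @ [c]}"
  have "{x\<in>seqs n. take ?k x = z} = ?B 0 \<union> ?B 1"
  proof (intro set_eqI iffI)
    fix x assume x: "x \<in> {x\<in>seqs n. take ?k x = z}"
    then have "?k < length x" "set x \<subseteq> {0,1}" using assms by (simp_all add: seqs_def)
    then show "x \<in> ?B 0 \<union> ?B 1" using x nth_mem by (fastforce simp: take_Suc_conv_app_nth)
  next
    fix x assume "x \<in> ?B 0 \<union> ?B 1"
    then show "x \<in> {x\<in>seqs n. take ?k x = z}"
      by (auto dest: arg_cong[where f = "take ?k"] simp: min_def)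
  qed
  then have "prefix_prob n d z = (\<Sum>x\<in>?B 0 \<union> ?B 1. d x)" by (simp add: prefix_prob_def)
  also have "\<dots> = (\<Sum>x\<in>?B 0. d x) + (\<Sum>x\<in>?B 1. d x)"
    by (rule sum.union_disjoint) (use finite_seqs[of n] in auto)
  finally show ?thesis by (simp add: prefix_prob_def)
qed

lemma prefix_prob_full: "z \<in> seqs n \<Longrightarrow> prefix_prob n d z = d z"
proof -
  assume "z \<in> seqs n"
  then have "{x\<in>seqs n. take (length z) x = z} = {z}" by (auto simp: seqs_def)
  then show ?thesis by (simp add: prefix_prob_def)
qed

lemma prefix_prob_tcount_invariant:
  assumes d: "exch_zero_start n d"
    and z: "set z \<subseteq> {0,1}" "set z' \<subseteq> {0,1}" "z \<noteq> []" "z' \<noteq> []" "hd z = 0" "hd z' = 0"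
       "length z = length z'" "length z \<le> n" "tcount z = tcount z'"
  shows "prefix_prob n d z = prefix_prob n d z'"
proof -
  let ?k = "length z"
  have zs: "z \<in> seqs ?k" "z' \<in> seqs ?k" using z by (auto simp: seqs_def)
  have "d (z @ y) = d (z' @ y)" if y: "y \<in> seqs (n - ?k)" for y
  proof -
    have in_n: "z @ y \<in> seqs n" "z' @ y \<in> seqs n" using zs y z(8) by (auto simp: seqs_def)
    have "tcount (z @ y) = tcount (z' @ y)" by (rule tcount_append_cong) (use z in simp_all)
    then have "tcm (z @ y) = tcm (z' @ y)" using tcm_eq_iff_tcount seqs_binary in_n by blast
    moreover have "(z @ y)!0 = 0" "(z' @ y)!0 = 0" using z by (simp_all add: nth_append hd_conv_nth)
    ultimately show ?thesis using d in_n unfolding exch_zero_start_def by blast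
  qed
  then have "(\<Sum>y\<in>seqs (n - ?k). d (z @ y)) = (\<Sum>y\<in>seqs (n - ?k). d (z' @ y))"
    by (intro sum.cong) simp_all
  moreover have "prefix_prob n d z = (\<Sum>y\<in>seqs (n - ?k). d (z @ y))"
    unfolding prefix_prob_def by (rule sum_over_prefix[OF zs(1) z(8)])
  moreover have "prefix_prob n d z' = (\<Sum>y\<in>seqs (n - ?k). d (z' @ y))"
    unfolding prefix_prob_def z(7)[symmetric] by (rule sum_over_prefix[OF zs(2) z(8)])
  ultimately show ?thesis by simp
qed

text \<open>If the coordinates of \<open>w\<close> vanish, the weight of every block word \<open>0\<^sup>a 1\<^sup>b\<close> vanishes;
  for \<open>b = 0\<close> this follows by downward induction on \<open>a\<close> via splitting off the next letter.\<close>
lemma prefix_prob_block_words: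
  assumes w: "\<And>a b. a + b + 2 \<le> n \<Longrightarrow>
      prefix_prob n d (replicate (a+1) 0 @ replicate (b+1) 1) = 0"
    and w_last: "prefix_prob n d (replicate n 0) = 0"
    and ab: "1 \<le> a" "a + b \<le> n"
  shows "prefix_prob n d (replicate a 0 @ replicate b 1) = 0"
proof (cases b)
  case (Suc b')
  then show ?thesis using w[of "a - 1" b'] ab by simp
next
  case 0
  have "prefix_prob n d (replicate a 0) = 0" if "1 \<le> a" "a \<le> n" for a
    using that
  proof (induction "n - a" arbitrary: a)
    case (Suc k)
    have "prefix_prob n d (replicate (Suc a) 0) = 0"
      using Suc by (intro Suc.hyps) simp_all
    then have "prefix_prob n d (replicate a 0 @ [0]) = 0"
      by (simp add: replicate_append_same)
    moreover have "prefix_prob n d (replicate a 0 @ [1]) = 0"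
      using w[of "a - 1" 0] Suc by simp
    ultimately show ?case using prefix_prob_split[of "replicate a 0" n d] Suc by simp
  qed (use w_last in simp)
  then show ?thesis using 0 ab by simp
qed

text \<open>The induction step on the number of descents: words ending in 0 reduce, via
  \<open>rearrange_end_0\<close> and splitting, to words with one descent fewer.\<close>
lemma prefix_prob_step_end_0:
  assumes d: "exch_zero_start n d"
    and IH: "\<And>u. set u \<subseteq> {0,1} \<Longrightarrow> u \<noteq> [] \<Longrightarrow> hd u = 0 \<Longrightarrow> length u \<le> n \<Longrightarrow>
             tcount u 1 0 = m \<Longrightarrow> prefix_prob n d u = 0"
    and z: "set z \<subseteq> {0,1}" "z \<noteq> []" "hd z = 0" "length z \<le> n"
       "tcount z 1 0 = Suc m" "last z = 0"
  shows "prefix_prob n d z = 0"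
proof -
  obtain u where u: "set u \<subseteq> {0,1}" "u \<noteq> []" "hd u = 0" "last u = 1"
      "length u + 1 = length z" "tcount (u @ [0]) = tcount z"
    using rearrange_end_0[OF z(1,2,3,6)] z(5) by auto
  have "tcount (u @ [0]) 1 0 = tcount u 1 0 + 1" using u(2,4) by (simp add: tcount_snoc)
  then have tu: "tcount u 1 0 = m" using u(6) z(5) by simp
  have "prefix_prob n d u = 0"
    by (rule IH) (use u z tu in simp_all)
  moreover have "prefix_prob n d (u @ [1]) = 0"
    by (rule IH) (use u z tu in \<open>simp_all add: tcount_snoc\<close>)
  moreover have "prefix_prob n d z = prefix_prob n d (u @ [0])"
    by (rule prefix_prob_tcount_invariant[OF d]) (use z u in simp_all)
  ultimately show ?thesis using prefix_prob_split[of u n d] u z by simp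
qed

text \<open>Words ending in 1 reduce, via \<open>rearrange_end_1\<close>, to words ending in 0 with the same
  number of descents, handled by the previous lemma.\<close>
lemma prefix_prob_step_end_1:
  assumes d: "exch_zero_start n d"
    and IH: "\<And>u. set u \<subseteq> {0,1} \<Longrightarrow> u \<noteq> [] \<Longrightarrow> hd u = 0 \<Longrightarrow> length u \<le> n \<Longrightarrow>
             tcount u 1 0 = m \<Longrightarrow> prefix_prob n d u = 0"
    and z: "set z \<subseteq> {0,1}" "z \<noteq> []" "hd z = 0" "length z \<le> n"
       "tcount z 1 0 = Suc m" "last z = 1"
  shows "prefix_prob n d z = 0"
proof -
  obtain u where u: "set u \<subseteq> {0,1}" "u \<noteq> []" "hd u = 0" "last u = 0"
      "length u + 1 = length z" "tcount (u @ [1]) = tcount z"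
    using rearrange_end_1[OF z(1,2,3,6)] z(5) by auto
  have "tcount (u @ [1]) 1 0 = tcount u 1 0" by (simp add: tcount_snoc)
  then have tu: "tcount u 1 0 = Suc m" using u(6) z(5) by simp
  have "prefix_prob n d u = 0"
    by (rule prefix_prob_step_end_0[OF d IH]) (use u z tu in simp_all)
  moreover have "prefix_prob n d (u @ [0]) = 0"
    by (rule prefix_prob_step_end_0[OF d IH]) (use u z tu in \<open>simp_all add: tcount_snoc\<close>)
  moreover have "prefix_prob n d z = prefix_prob n d (u @ [1])"
    by (rule prefix_prob_tcount_invariant[OF d]) (use z u in simp_all)
  ultimately show ?thesis using prefix_prob_split[of u n d] u z by simp
qed

lemma wvec_zero_imp_zero:
  assumes d: "exch_zero_start n d" and n: "1 \<le> n"
    and w: "\<And>a b. a + b + 2 \<le> n \<Longrightarrow>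
      prefix_prob n d (replicate (a+1) 0 @ replicate (b+1) 1) = 0"
    and w_last: "prefix_prob n d (replicate n 0) = 0"
    and x: "x \<in> seqs n" "x!0 = 0"
  shows "d x = 0"
proof -
  have "prefix_prob n d z = 0"
    if "set z \<subseteq> {0,1}" "z \<noteq> []" "hd z = 0" "length z \<le> n" "tcount z 1 0 = m" for z m
    using that
  proof (induction m arbitrary: z)
    case 0
    then obtain a b where "a \<ge> 1" "z = replicate a 0 @ replicate b (1::nat)"
      using no_descent_block_word[of z] by blast
    then show ?case using prefix_prob_block_words[OF w w_last] 0 by simp
  next
    case (Suc m)
    have "last z \<in> {0,1}" using Suc.prems(1,2) last_in_set by blast
    then consider "last z = 0" | "last z = 1" by auto
    then show ?case
    proof cases
      case 1
      show ?thesis using prefix_prob_step_end_0[OF d Suc.IH Suc.prems 1] .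
    next
      case 2
      show ?thesis using prefix_prob_step_end_1[OF d Suc.IH Suc.prems 2] .
    qed
  qed
  moreover have "x \<noteq> []" using x n by (auto simp: seqs_def)
  ultimately have "prefix_prob n d x = 0" using x by (auto simp: seqs_def hd_conv_nth)
  then show ?thesis using prefix_prob_full[OF x(1)] by simp
qed

lemma wvec_determines_law:
  assumes n: "1 \<le> n"
    and p: "markov_exch n p" "zero_start n p" and p': "markov_exch n p'" "zero_start n p'"
    and w: "wvec n n p = wvec n n p'"
    and x: "x \<in> seqs n"
  shows "p x = p' x"
proof (cases "x!0 = 0")
  case True
  define d where "d x = p x - p' x" for x
  have pp: "prefix_prob n d zs = prefix_prob n p zs - prefix_prob n p' zs" for zs
    unfolding d_def prefix_prob_def by (simp add: sum_subtractf)
  have exch: "\<forall>xs\<in>seqs n. \<forall>ys\<in>seqs n. xs!0 = ys!0 \<and> tcm xs = tcm ys \<longrightarrow> q xs = q ys"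
    if "markov_exch n q" for q
    using that unfolding markov_exch_def by blast
  have "exch_zero_start n d"
    unfolding exch_zero_start_def
  proof (intro ballI impI)
    fix x y assume xy: "x \<in> seqs n" "y \<in> seqs n" "x!0 = 0" "y!0 = 0" "tcm x = tcm y"
    then have same: "x!0 = y!0 \<and> tcm x = tcm y" by simp
    have "p x = p y" using exch[OF p(1)] xy(1,2) same by blast
    moreover have "p' x = p' y" using exch[OF p'(1)] xy(1,2) same by blast
    ultimately show "d x = d y" by (simp add: d_def)
  qed
  moreover have "prefix_prob n d (replicate (a+1) 0 @ replicate (b+1) 1) = 0"
    if "a + b + 2 \<le> n" for a b
    using fun_cong[OF w, of "(a,b)"] that by (simp add: pp wvec_def)
  moreover have "prefix_prob n d (replicate n 0) = 0"
    using fun_cong[OF w, of "(n - 1, 0)"] n by (simp add: pp wvec_def)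
  ultimately have "d x = 0" by (rule wvec_zero_imp_zero[OF _ n _ _ x True])
  then show ?thesis by (simp add: d_def)
next
  case False
  then show ?thesis using p(2) p'(2) x by (simp add: zero_start_def)
qed

text \<open>Necessity: an \<open>r\<close>-extension is an \<open>r\<close>-Markov exchangeable law starting with 0 whose
  \<open>w\<close>-vector equals that of \<open>p\<close>.\<close>
lemma extendible_imp_conv:
  assumes n: "1 \<le> n" "n \<le> r"
    and p: "(\<Sum>x\<in>{x\<in>seqs n. x!0 = 0}. p x) = 1"
    and ext: "extendible n r p"
  shows "wvec n n p \<in> conv_fin (gamma n r ` Phi0 r)"
proof -
  obtain q where q: "markov_exch r q" "\<And>ys. ys \<in> seqs n \<Longrightarrow> marg r q n ys = p ys"
    using ext unfolding extendible_def by blast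
  have "(\<Sum>x\<in>{x\<in>seqs r. x!0 = 0}. q x) = prefix_prob r q [0]"
    using n by (simp add: prefix_prob_zero)
  also have "\<dots> = prefix_prob n (marg r q n) [0]"
    using n by (simp add: prefix_prob_marg)
  also have "\<dots> = prefix_prob n p [0]"
    using q(2) by (rule prefix_prob_cong)
  also have "\<dots> = 1"
    using n p by (simp add: prefix_prob_zero)
  finally have "zero_start r q" using zero_start_iff q(1) by (simp add: markov_exch_def)
  have "wvec n n p = wvec n n (marg r q n)" using q(2) by (intro wvec_cong) simp
  also have "\<dots> = wvec n r q" using n by (simp add: wvec_marg)
  also have "\<dots> \<in> conv_fin (gamma n r ` Phi0 r)"
    using wvec_in_conv_gamma q(1) \<open>zero_start r q\<close> by blast
  finally show ?thesis .
qed

text \<open>Sufficiency: a convex combination of the \<open>h_R\<close> realising \<open>w\<close> is an \<open>r\<close>-Markov exchangeable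
  law whose \<open>n\<close>-marginal has the same \<open>w\<close> as \<open>p\<close>, hence equals \<open>p\<close>.\<close>
lemma conv_imp_extendible:
  assumes n: "1 \<le> n" "n \<le> r"
    and p: "markov_exch n p" "zero_start n p"
    and w: "wvec n n p \<in> conv_fin (gamma n r ` Phi0 r)"
  shows "extendible n r p"
proof -
  let ?G = "gamma n r ` Phi0 r"
  obtain c where c: "\<forall>s\<in>?G. c s \<ge> 0" "(\<Sum>s\<in>?G. c s) = 1"
      "\<And>k. wvec n n p k = (\<Sum>s\<in>?G. c s * s k)"
    using w unfolding conv_fin_def by blast
  define R where "R s = inv_into (Phi0 r) (gamma n r) s" for s
  have R: "R s \<in> Phi0 r" "gamma n r (R s) = s" if "s \<in> ?G" for s
    using that unfolding R_def by (auto intro: inv_into_into f_inv_into_f)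
  define q where "q x = (\<Sum>s\<in>?G. c s * hR r (R s) x)" for x
  have q: "markov_exch r q"
    unfolding q_def by (rule markov_exch_mixture) (use c R in \<open>auto intro: hR_markov_exch\<close>)
  have q0: "zero_start r q"
    using hR_zero_start unfolding zero_start_def q_def by simp
  have "wvec n r q k = wvec n n p k" for k
    using R c(3) unfolding q_def wvec_mixture gamma_def[symmetric] by simp
  then have "wvec n n (marg r q n) = wvec n n p" using n by (simp add: wvec_marg fun_eq_iff)
  moreover have "markov_exch n (marg r q n)" "zero_start n (marg r q n)"
    using n q q0 by (auto intro: marg_markov_exch marg_zero_start)
  ultimately have "\<forall>ys\<in>seqs n. marg r q n ys = p ys"
    using wvec_determines_law n p by metis
  then show ?thesis unfolding extendible_def using q by blast
qed

text \<open>Monotonicity in \<open>r\<close>: each \<open>\<gamma>\<^sub>R\<close> with \<open>R \<in> \<Phi>(0,r+1)\<close> is the \<open>w\<close>-vector of the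
  \<open>r\<close>-marginal of \<open>h_R\<close>, which is \<open>r\<close>-Markov exchangeable.\<close>
lemma conv_gamma_Suc_subset:
  assumes "n \<le> r" "1 \<le> r"
  shows "conv_fin (gamma n (r + 1) ` Phi0 (r + 1)) \<subseteq> conv_fin (gamma n r ` Phi0 r)"
proof (rule conv_fin_subset, rule image_subsetI)
  fix R assume R: "R \<in> Phi0 (r + 1)"
  let ?h = "marg (r + 1) (hR (r + 1) R) r"
  have "markov_exch r ?h"
    using assms hR_markov_exch[OF R] by (intro marg_markov_exch) simp_all
  moreover have "zero_start r ?h"
    using assms by (intro marg_zero_start hR_zero_start)
  ultimately have "wvec n r ?h \<in> conv_fin (gamma n r ` Phi0 r)" by (rule wvec_in_conv_gamma)
  then show "gamma n (r + 1) R \<in> conv_fin (gamma n r ` Phi0 r)"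
    using assms by (simp add: gamma_def wvec_marg)
qed

text \<open>The theorem (the hypothesis \<open>2 \<le> n\<close> is only used as \<open>1 \<le> n\<close>).\<close>
theorem mainTheorem12:
  fixes n r :: nat and p :: "nat list \<Rightarrow> real"
  assumes "2 \<le> n" and "n \<le> r"
    and "markov_exch n p"
    and "(\<Sum>xs\<in>{xs\<in>seqs n. xs ! 0 = 0}. p xs) = 1"
  shows "(extendible n r p \<longleftrightarrow> wvec n n p \<in> conv_fin (gamma n r ` Phi0 r))
    \<and> conv_fin (gamma n (r + 1) ` Phi0 (r + 1)) \<subseteq> conv_fin (gamma n r ` Phi0 r)"
proof -
  have n: "1 \<le> n" "n \<le> r" using assms(1,2) by simp_all
  have "zero_start n p" using zero_start_iff assms(3,4) by (simp add: markov_exch_def)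
  then show ?thesis
    using extendible_imp_conv[OF n assms(4)] conv_imp_extendible[OF n assms(3)]
      conv_gamma_Suc_subset[OF n(2)] n by auto
qed

end
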